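(* Let $a,b\in\mathbb C$ with $m:=a-b\in\mathbb Z_{\ge0}$, and let $\chi_{a,b}$ be the character $z\mapsto z^a\bar z^b$ of $\mathrm{GL}_1(\mathbb C)$. Then $\Gamma_{1,m}(\chi_{a,b})\cong\mathrm{St}([b+\tfrac12,\,a-\tfrac12])$ as $\mathbb H_m$-modules (for $m=0$ this is the one-dimensional module of $\mathbb H_0=\mathbb C$).
   Context: $G=\mathrm{GL}_n(\mathbb C)$ with $K=U(n)$; the complexified Lie algebra of $\mathfrak g_0=\mathfrak{gl}_n(\mathbb C)$ is identified with $\mathfrak g_0\oplus\mathfrak g_0$ via $(E,E')\mapsto\frac12(E-j\,iE)+\frac12(\overline{E}+j\,i\overline{E})$ ($j$ the complexification's imaginary unit, $i=\sqrt{-1}I_n$). $\mathbb H_m$ is the graded Hecke algebra of type $A$: generated by $y_1,\dots,y_m,s_1,\dots,s_{m-1}$ with relations $y_ay_b=y_by_a$, $s_a^2=1$, $s_as_b=s_bs_a$ ($|a-b|>1$), $s_as_{a+1}s_a=s_{a+1}s_as_{a+1}$, $s_ay_a-y_{a+1}s_a=1$, $s_ay_b=y_bs_a$ ($b\ne a,a+1$). Products $\pi_1\times\pi_2=\mathbb H_{m_1+m_2}\otimes_{\mathbb H_{m_1}\otimes\mathbb H_{m_2}}(\pi_1\boxtimes\pi_2)$ with the embedding $y_a\otimes1\mapsto y_a$, $1\otimes y_b\mapsto y_{m_1+b}$, $s_a\otimes1\mapsto s_a$, $1\otimes s_b\mapsto s_{m_1+b}$. For $c\in\mathbb C$, $\psi_c$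 is the character of $\mathbb H_1=\mathbb C[y_1]$ with $y_1\mapsto c$. A segment $[a,b]$ ($b-a\in\mathbb Z_{\ge0}$) is the set $\{a,a+1,\dots,b\}$; $[a,a-1]=\emptyset$. $\mathrm{St}([a,b])$ is the unique simple quotient of $\psi_a\times\psi_{a+1}\times\cdots\times\psi_b$; it is one-dimensional and restricts to the sign representation of the symmetric group. Functor. $V=\mathbb C^n$ with $g$ acting by $\overline g$; $(0,E)$ acts on $V$ by $E$ and $(E,0)$ by $0$. $\Omega_{kl}=\sum_{a,b}1^{\otimes k}\otimes E_{ab}\otimes1^{\otimes(l-k-1)}\otimes E_{ba}\otimes1^{\otimes(m-l)}$ ($E_{ab}$ matrix units) acts on $X\otimes V^{\otimes m}$ with $E$ in slot $0$ acting on $X$ by $(0,E)$ and in slot $k\ge1$ on the $k$-th $V$ by $(0,E)$. $\Gamma_{n,m}(X)=\mathrm{Hom}_K(\mathrm{triv},X\otimes V^{\otimes m})$ with $s_a\mapsto-\Omega_{a,a+1}$, $y_l\mapsto\sum_{0\le x<l}\Omega_{xl}+\frac n2$. *)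

theory Defs
  imports "HOL-Analysis.Analysis"
begin

text \<open>An H_m-module is a complex vector space (here: a subspace M of a complex vector
space with scalar multiplication smul) together with operators Y l (image of y_l, 1 \<le> l \<le> m)
and S a (image of s_a, 1 \<le> a < m) that are linear on M, preserve M, and satisfy the
defining relations of H_m on M.\<close>

definition Hsubspace :: "(complex \<Rightarrow> 'v::ab_group_add \<Rightarrow> 'v) \<Rightarrow> 'v set \<Rightarrow> bool" where
  "Hsubspace smul N \<longleftrightarrow> 0 \<in> N \<and> (\<forall>u\<in>N. \<forall>v\<in>N. u + v \<in> N) \<and> (\<forall>c. \<forall>v\<in>N. smul c v \<in> N)"

definition lin_on :: "(complex \<Rightarrow> 'v::ab_group_add \<Rightarrow> 'v) \<Rightarrow> 'v set \<Rightarrow> ('v \<Rightarrow> 'v) \<Rightarrow> bool" where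
  "lin_on smul M f \<longleftrightarrow> f ` M \<subseteq> M \<and> (\<forall>u\<in>M. \<forall>v\<in>M. f (u + v) = f u + f v)
     \<and> (\<forall>c. \<forall>v\<in>M. f (smul c v) = smul c (f v))"

definition Hmod :: "(complex \<Rightarrow> 'v::ab_group_add \<Rightarrow> 'v) \<Rightarrow> nat \<Rightarrow> 'v set
    \<Rightarrow> (nat \<Rightarrow> 'v \<Rightarrow> 'v) \<Rightarrow> (nat \<Rightarrow> 'v \<Rightarrow> 'v) \<Rightarrow> bool" where
  "Hmod smul m M Y S \<longleftrightarrow>
     vector_space smul \<and> Hsubspace smul M \<and>
     (\<forall>l\<in>{1..m}. lin_on smul M (Y l)) \<and> (\<forall>a\<in>{1..<m}. lin_on smul M (S a)) \<and>
     (\<forall>v\<in>M.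
        (\<forall>a\<in>{1..m}. \<forall>b\<in>{1..m}. Y a (Y b v) = Y b (Y a v)) \<and>
        (\<forall>a\<in>{1..<m}. S a (S a v) = v) \<and>
        (\<forall>a\<in>{1..<m}. \<forall>b\<in>{1..<m}. (a + 1 < b \<or> b + 1 < a) \<longrightarrow> S a (S b v) = S b (S a v)) \<and>
        (\<forall>a. 1 \<le> a \<and> a + 1 < m \<longrightarrow> S a (S (a+1) (S a v)) = S (a+1) (S a (S (a+1) v))) \<and>
        (\<forall>a\<in>{1..<m}. S a (Y a v) - Y (a+1) (S a v) = v) \<and>
        (\<forall>a\<in>{1..<m}. \<forall>b\<in>{1..m}. b \<noteq> a \<and> b \<noteq> a + 1 \<longrightarrow> S a (Y b v) = Y b (S a v)))"

definition Hsubmod :: "(complex \<Rightarrow> 'v::ab_group_add \<Rightarrow> 'v) \<Rightarrow> nat \<Rightarrow> 'v set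
    \<Rightarrow> (nat \<Rightarrow> 'v \<Rightarrow> 'v) \<Rightarrow> (nat \<Rightarrow> 'v \<Rightarrow> 'v) \<Rightarrow> 'v set \<Rightarrow> bool" where
  "Hsubmod smul m M Y S N \<longleftrightarrow> N \<subseteq> M \<and> Hsubspace smul N \<and>
     (\<forall>l\<in>{1..m}. Y l ` N \<subseteq> N) \<and> (\<forall>a\<in>{1..<m}. S a ` N \<subseteq> N)"

definition Hsimple :: "(complex \<Rightarrow> 'v::ab_group_add \<Rightarrow> 'v) \<Rightarrow> nat \<Rightarrow> 'v set
    \<Rightarrow> (nat \<Rightarrow> 'v \<Rightarrow> 'v) \<Rightarrow> (nat \<Rightarrow> 'v \<Rightarrow> 'v) \<Rightarrow> bool" where
  "Hsimple smul m M Y S \<longleftrightarrow> Hmod smul m M Y S \<and> M \<noteq> {0} \<and>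
     (\<forall>N. Hsubmod smul m M Y S N \<longrightarrow> N = {0} \<or> N = M)"

text \<open>M is a quotient of psi_{c 1} x ... x psi_{c m}.  By the universal property of the
induced module (Frobenius reciprocity), H_m-maps
psi_{c 1} x ... x psi_{c m} = H_m \<otimes>_{C[y_1..y_m]} (psi_{c 1} \<boxtimes> ... \<boxtimes> psi_{c m}) \<rightarrow> M
correspond to vectors v \<in> M with y_l v = c l v for all l; such a map is surjective iff
v generates M as an H_m-module.\<close>
definition Hquot_of_product :: "(complex \<Rightarrow> 'v::ab_group_add \<Rightarrow> 'v) \<Rightarrow> nat \<Rightarrow> (nat \<Rightarrow> complex)
    \<Rightarrow> 'v set \<Rightarrow> (nat \<Rightarrow> 'v \<Rightarrow> 'v) \<Rightarrow> (nat \<Rightarrow> 'v \<Rightarrow> 'v) \<Rightarrow> bool" where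
  "Hquot_of_product smul m c M Y S \<longleftrightarrow> Hmod smul m M Y S \<and>
     (\<exists>v\<in>M. (\<forall>l\<in>{1..m}. Y l v = smul (c l) v) \<and>
        (\<forall>N. Hsubmod smul m M Y S N \<and> v \<in> N \<longrightarrow> N = M))"

text \<open>St([p,q]) (with q - p + 1 = m) is the unique (up to isomorphism) simple quotient of
psi_p x psi_{p+1} x ... x psi_q.  Hence an H_m-module is isomorphic to St([p,q]) iff it
is a simple quotient of that product.\<close>
definition is_St :: "(complex \<Rightarrow> 'v::ab_group_add \<Rightarrow> 'v) \<Rightarrow> nat \<Rightarrow> complex \<Rightarrow> complex
    \<Rightarrow> 'v set \<Rightarrow> (nat \<Rightarrow> 'v \<Rightarrow> 'v) \<Rightarrow> (nat \<Rightarrow> 'v \<Rightarrow> 'v) \<Rightarrow> bool" where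
  "is_St smul m p q M Y S \<longleftrightarrow> q - p + 1 = of_nat m \<and>
     Hsimple smul m M Y S \<and>
     Hquot_of_product smul m (\<lambda>l. p + of_nat (l - 1)) M Y S"

text \<open>chi_{a,b}(z) = z^a conj(z)^b = |z|^(a+b) e^{i (a-b) arg z} (well defined when a-b is an integer).\<close>
definition chi :: "complex \<Rightarrow> complex \<Rightarrow> complex \<Rightarrow> complex" where
  "chi a b z = exp ((a + b) * of_real (ln (norm z)) + (a - b) * \<i> * of_real (Arg z))"

definition dchi :: "complex \<Rightarrow> complex \<Rightarrow> complex \<Rightarrow> complex" where
  "dchi a b E = vector_derivative (\<lambda>t::real. chi a b (exp (of_real t * E))) (at 0)"

text \<open>Action of the complexified element (E,E') on chi_{a,b} via
(E,E') \<mapsto> 1/2(E - j iE) + 1/2(conj E + j i conj E), j acting as multiplication by sqrt(-1).\<close>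
definition actX :: "complex \<Rightarrow> complex \<Rightarrow> complex \<Rightarrow> complex \<Rightarrow> complex" where
  "actX a b E E' = (dchi a b E - \<i> * dchi a b (\<i> * E)) / 2
                 + (dchi a b (cnj E') + \<i> * dchi a b (\<i> * cnj E')) / 2"

text \<open>X \<otimes> V^{\<otimes> m} with X = chi_{a,b}, V = C^1 is one-dimensional, identified with C.
K = U(1) acts by z \<mapsto> chi_{a,b}(z) conj(z)^m.\<close>
definition Gamma_carrier :: "complex \<Rightarrow> complex \<Rightarrow> nat \<Rightarrow> complex set" where
  "Gamma_carrier a b m = {w. \<forall>z::complex. norm z = 1 \<longrightarrow> chi a b z * cnj z ^ m * w = w}"

text \<open>Omega_{kl} for n = 1: the only matrix unit is E_11 = 1; slot 0 acts on X by (0,E),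
slots k \<ge> 1 act on V by (0,E) = E.\<close>
definition Omega :: "complex \<Rightarrow> complex \<Rightarrow> nat \<Rightarrow> nat \<Rightarrow> complex" where
  "Omega a b k l = (\<Sum>i<(1::nat). \<Sum>j<(1::nat).
      (if k = 0 then actX a b 0 1 else 1) * 1)"

definition Gamma_Y :: "complex \<Rightarrow> complex \<Rightarrow> nat \<Rightarrow> complex \<Rightarrow> complex" where
  "Gamma_Y a b l w = ((\<Sum>x<l. Omega a b x l) + of_nat 1 / 2) * w"

definition Gamma_S :: "complex \<Rightarrow> complex \<Rightarrow> nat \<Rightarrow> complex \<Rightarrow> complex" where
  "Gamma_S a b k w = - Omega a b k (k + 1) * w"

end

theory Submission imports Defs begin

text \<open>Since a - b = m, the circle U(1) acts trivially on the line chi_{a,b} \<otimes> V^{\<otimes> m}, so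
  Gamma_{1,m}(chi_{a,b}) is all of C.  Differentiating chi_{a,b} along the real and the imaginary
  direction gives a + b and (a - b) i, so (0,1) acts on chi_{a,b} by b.  Hence Omega_{0l} = b and
  Omega_{kl} = 1 for k \<ge> 1: the y_l act by b + 1/2 + (l - 1) and the s_a by -1.  A one-dimensional
  module on which the s_a act by -1 and y_1, ..., y_m by p, p + 1, ..., p + m - 1 is simple and is
  generated by any nonzero vector, hence it is St([p, p + m - 1]).\<close>

lemma Hsubspace_complex_cases:
  assumes "Hsubspace (*) N"
  shows "N = {0} \<or> N = (UNIV :: complex set)"
proof (cases "N = {0}")
  case False
  then obtain v where v: "v \<in> N" "v \<noteq> 0"
    using assms unfolding Hsubspace_def by auto
  have "w \<in> N" for w
  proof -
    have "(w / v) * v \<in> N" using assms v unfolding Hsubspace_def by blast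
    then show ?thesis using v by simp
  qed
  then show ?thesis by auto
qed simp

lemma lin_on_mult_complex: "lin_on (*) (UNIV :: complex set) ((*) c)"
  by (simp add: lin_on_def algebra_simps)

lemma Hmod_sign_character:
  fixes p :: complex
  assumes Y: "\<forall>l\<in>{1..m}. Y l = (*) (p + of_nat (l - 1))"
    and S: "\<forall>k\<in>{1..<m}. S k = uminus"
  shows "Hmod (*) m UNIV Y S"
proof -
  have "lin_on (*) UNIV (Y l)" if "l \<in> {1..m}" for l
    using Y that lin_on_mult_complex by metis
  moreover have "lin_on (*) UNIV (S k)" if "k \<in> {1..<m}" for k
  proof -
    have "uminus = (*) (-1 :: complex)" by (simp add: fun_eq_iff)
    then show ?thesis using S that lin_on_mult_complex by metis
  qed
  moreover have "Hsubspace (*) (UNIV :: complex set)"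
    by (simp add: Hsubspace_def)
  ultimately show ?thesis
    unfolding Hmod_def using vector_space_over_itself.vector_space_axioms Y S
    by (auto simp: field_simps)
qed

lemma is_St_sign_character:
  fixes p q :: complex
  assumes "q - p + 1 = of_nat m"
    and Y: "\<forall>l\<in>{1..m}. Y l = (*) (p + of_nat (l - 1))"
    and S: "\<forall>k\<in>{1..<m}. S k = uminus"
  shows "is_St (*) m p q UNIV Y S"
proof -
  have submod_trivial: "N = {0} \<or> N = UNIV" if "Hsubmod (*) m UNIV Y S N" for N
    using that Hsubspace_complex_cases unfolding Hsubmod_def by blast
  have "Hsubmod (*) m UNIV Y S N \<and> 1 \<in> N \<longrightarrow> N = UNIV" for N
    using submod_trivial[of N] by fastforce
  moreover have "\<forall>l\<in>{1..m}. Y l 1 = (p + of_nat (l - 1)) * 1"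
    using Y by simp
  ultimately show ?thesis
    unfolding is_St_def Hsimple_def Hquot_of_product_def
    using assms(1) Hmod_sign_character[OF Y S] submod_trivial by blast
qed

lemma dchi_zero: "dchi a b 0 = 0"
  unfolding dchi_def by (simp add: chi_def)

lemma dchi_one: "dchi a b 1 = a + b"
proof -
  have chi_real: "(\<lambda>t::real. chi a b (exp (of_real t * 1))) = (\<lambda>t. exp ((a + b) * of_real t))"
    by (simp add: chi_def exp_of_real)
  have "((\<lambda>z. exp ((a + b) * z)) has_field_derivative exp ((a + b) * of_real 0) * (a + b))
          (at (of_real 0))"
    by (auto intro!: derivative_eq_intros)
  then have "((\<lambda>t::real. exp ((a + b) * of_real t)) has_vector_derivative (a + b)) (at 0)"
    using has_vector_derivative_real_field by fastforce
  then show ?thesis unfolding dchi_def chi_real by (rule vector_derivative_at)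
qed

lemma dchi_imaginary_unit: "dchi a b \<i> = (a - b) * \<i>"
proof -
  have "((\<lambda>z. exp ((a - b) * \<i> * z)) has_field_derivative
          exp ((a - b) * \<i> * of_real 0) * ((a - b) * \<i>)) (at (of_real 0))"
    by (auto intro!: derivative_eq_intros)
  then have deriv: "((\<lambda>t::real. exp ((a - b) * \<i> * of_real t)) has_vector_derivative ((a - b) * \<i>)) (at 0)"
    using has_vector_derivative_real_field by fastforce
  have "((\<lambda>t::real. chi a b (exp (of_real t * \<i>))) has_vector_derivative ((a - b) * \<i>)) (at 0)"
  proof (rule has_vector_derivative_transform_within_open[OF deriv, of "{-pi<..<pi}"])
    fix t :: real
    assume "t \<in> {-pi<..<pi}"
    then have "Arg (exp (of_real t * \<i>)) = t" by (subst Arg_exp) auto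
    moreover have "norm (exp (of_real t * \<i>)) = 1" by (simp add: norm_exp_eq_Re)
    ultimately show "exp ((a - b) * \<i> * of_real t) = chi a b (exp (of_real t * \<i>))"
      by (simp add: chi_def)
  qed auto
  then show ?thesis unfolding dchi_def by (rule vector_derivative_at)
qed

lemma actX_zero_one: "actX a b 0 1 = b"
  by (simp add: actX_def dchi_zero dchi_one dchi_imaginary_unit algebra_simps)

lemma Omega_eq: "Omega a b k l = (if k = 0 then b else 1)"
  by (simp add: Omega_def actX_zero_one)

lemma sum_Omega: "l \<ge> 1 \<Longrightarrow> (\<Sum>x<l. Omega a b x l) = b + of_nat (l - 1)"
proof (induction l)
  case (Suc l)
  then show ?case by (cases "l = 0") (auto simp: Omega_eq)
qed simp

lemma Gamma_Y_eq: "l \<ge> 1 \<Longrightarrow> Gamma_Y a b l = (*) (b + 1/2 + of_nat (l - 1))"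
  by (simp add: fun_eq_iff Gamma_Y_def sum_Omega algebra_simps)

lemma Gamma_S_eq: "k \<ge> 1 \<Longrightarrow> Gamma_S a b k = uminus"
  by (simp add: fun_eq_iff Gamma_S_def Omega_eq)

lemma chi_unit_circle:
  assumes "a - b = of_nat m" "norm z = 1"
  shows "chi a b z = z ^ m"
proof -
  have "chi a b z = exp (of_nat m * (\<i> * of_real (Arg z)))"
    using assms by (simp add: chi_def mult.assoc)
  also have "\<dots> = exp (\<i> * of_real (Arg z)) ^ m"
    by (rule exp_of_nat_mult)
  also have "exp (\<i> * of_real (Arg z)) = z"
  proof -
    have "z \<noteq> 0" using assms(2) by auto
    then show ?thesis using Arg_eq assms(2) by (metis mult_cancel_right2 of_real_1)
  qed
  finally show ?thesis .
qed

lemma Gamma_carrier_eq_UNIV: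
  assumes "a - b = of_nat m"
  shows "Gamma_carrier a b m = UNIV"
proof -
  have "chi a b z * cnj z ^ m = 1" if z: "norm z = 1" for z
  proof -
    have "chi a b z * cnj z ^ m = (z * cnj z) ^ m"
      using chi_unit_circle[OF assms z] by (simp add: power_mult_distrib)
    also have "z * cnj z = 1"
      using z by (metis complex_norm_square mult.commute of_real_1 power_one)
    finally show ?thesis by simp
  qed
  then show ?thesis unfolding Gamma_carrier_def by auto
qed

theorem lemma6p2:
  fixes a b :: complex and m :: nat
  assumes "a - b = of_nat m"
  shows "is_St (*) m (b + 1/2) (a - 1/2) (Gamma_carrier a b m) (Gamma_Y a b) (Gamma_S a b)"
proof -
  have "a - 1/2 - (b + 1/2) + 1 = of_nat m"
    using assms by (simp add: algebra_simps)
  moreover have "\<forall>l\<in>{1..m}. Gamma_Y a b l = (*) (b + 1/2 + of_nat (l - 1))"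
    by (simp add: Gamma_Y_eq)
  moreover have "\<forall>k\<in>{1..<m}. Gamma_S a b k = uminus"
    by (simp add: Gamma_S_eq)
  ultimately show ?thesis
    unfolding Gamma_carrier_eq_UNIV[OF assms] by (rule is_St_sign_character)
qed

end
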